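(* Fix integers $n\ge 2$, $m\ge 1$ and prompts $x_1,\dots,x_n$ (deterministic). For each $i$, let $y_i^1,\dots,y_i^m$ be i.i.d. responses drawn from a distribution $\pi(\cdot\mid x_i)$, independently across $i$, and let $r_i^j=r(x_i,y_i^j)$ be real rewards with finite variance. Let $\mu_i=\mathbb{E}[r(x_i,y)]$ and $\sigma_i^2=\mathrm{Var}[r(x_i,y)]$ for $y\sim\pi(\cdot\mid x_i)$. Define $\hat\mu_i=\frac1m\sum_{j=1}^m r_i^j$, $\hat{\bar\mu}=\frac1{nm}\sum_{i=1}^n\sum_{j=1}^m r_i^j$, and for $\lambda\in[0,1]$ the baseline $b_i^j(\lambda)=(1-\lambda)\hat\mu_i+\lambda\hat{\bar\mu}$. Let $$v=\frac1{nm}\sum_{i=1}^n\sigma_i^2,\qquad \bar\mu=\frac1n\sum_{i=1}^n\mu_i,\qquad s=\frac1{n-1}\sum_{i=1}^n(\mu_i-\bar\mu)^2,$$ and assume $s+v>0$. Then the function $$\lambda\mapsto \frac1{mn}\sum_{i=1}^n\sum_{j=1}^m\mathbb{E}\big[(b_i^j(\lambda)-\mu_i)^2\big]$$ (expectation over the responses) is minimized over $\lambda\in[0,1]$ at $\lambda^\star=\dfrac{v}{s+v}$. *)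

theory Defs
  imports "HOL-Probability.Probability"
begin

text \<open>Prompts are indexed by i < n (0-based), responses by j < m.
  x i is the i-th prompt, P p the response distribution given prompt p,
  rw p y the reward r(p,y), Y i j the j-th response to prompt i.\<close>

definition mu :: "('p \<Rightarrow> 'b measure) \<Rightarrow> ('p \<Rightarrow> 'b \<Rightarrow> real) \<Rightarrow> (nat \<Rightarrow> 'p) \<Rightarrow> nat \<Rightarrow> real" where
  "mu P rw x i = (\<integral>y. rw (x i) y \<partial>(P (x i)))"

definition sigma2 :: "('p \<Rightarrow> 'b measure) \<Rightarrow> ('p \<Rightarrow> 'b \<Rightarrow> real) \<Rightarrow> (nat \<Rightarrow> 'p) \<Rightarrow> nat \<Rightarrow> real" where
  "sigma2 P rw x i = (\<integral>y. (rw (x i) y - mu P rw x i)\<^sup>2 \<partial>(P (x i)))"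

definition vbar :: "('p \<Rightarrow> 'b measure) \<Rightarrow> ('p \<Rightarrow> 'b \<Rightarrow> real) \<Rightarrow> (nat \<Rightarrow> 'p) \<Rightarrow> nat \<Rightarrow> nat \<Rightarrow> real" where
  "vbar P rw x n m = (\<Sum>i<n. sigma2 P rw x i) / (real n * real m)"

definition mubar :: "('p \<Rightarrow> 'b measure) \<Rightarrow> ('p \<Rightarrow> 'b \<Rightarrow> real) \<Rightarrow> (nat \<Rightarrow> 'p) \<Rightarrow> nat \<Rightarrow> real" where
  "mubar P rw x n = (\<Sum>i<n. mu P rw x i) / real n"

definition sbar :: "('p \<Rightarrow> 'b measure) \<Rightarrow> ('p \<Rightarrow> 'b \<Rightarrow> real) \<Rightarrow> (nat \<Rightarrow> 'p) \<Rightarrow> nat \<Rightarrow> real" where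
  "sbar P rw x n = (\<Sum>i<n. (mu P rw x i - mubar P rw x n)\<^sup>2) / (real n - 1)"

definition rwd :: "('p \<Rightarrow> 'b \<Rightarrow> real) \<Rightarrow> (nat \<Rightarrow> 'p) \<Rightarrow> (nat \<Rightarrow> nat \<Rightarrow> 'a \<Rightarrow> 'b) \<Rightarrow> nat \<Rightarrow> nat \<Rightarrow> 'a \<Rightarrow> real" where
  "rwd rw x Y i j \<omega> = rw (x i) (Y i j \<omega>)"

definition muhat :: "('p \<Rightarrow> 'b \<Rightarrow> real) \<Rightarrow> (nat \<Rightarrow> 'p) \<Rightarrow> (nat \<Rightarrow> nat \<Rightarrow> 'a \<Rightarrow> 'b) \<Rightarrow> nat \<Rightarrow> nat \<Rightarrow> 'a \<Rightarrow> real" where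
  "muhat rw x Y m i \<omega> = (\<Sum>j<m. rwd rw x Y i j \<omega>) / real m"

definition mubarhat :: "('p \<Rightarrow> 'b \<Rightarrow> real) \<Rightarrow> (nat \<Rightarrow> 'p) \<Rightarrow> (nat \<Rightarrow> nat \<Rightarrow> 'a \<Rightarrow> 'b) \<Rightarrow> nat \<Rightarrow> nat \<Rightarrow> 'a \<Rightarrow> real" where
  "mubarhat rw x Y n m \<omega> = (\<Sum>i<n. \<Sum>j<m. rwd rw x Y i j \<omega>) / (real n * real m)"

definition baseline :: "('p \<Rightarrow> 'b \<Rightarrow> real) \<Rightarrow> (nat \<Rightarrow> 'p) \<Rightarrow> (nat \<Rightarrow> nat \<Rightarrow> 'a \<Rightarrow> 'b) \<Rightarrow> nat \<Rightarrow> nat \<Rightarrow> real \<Rightarrow> nat \<Rightarrow> nat \<Rightarrow> 'a \<Rightarrow> real" where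
  "baseline rw x Y n m lam i j \<omega> = (1 - lam) * muhat rw x Y m i \<omega> + lam * mubarhat rw x Y n m \<omega>"

definition mse :: "'a measure \<Rightarrow> ('p \<Rightarrow> 'b measure) \<Rightarrow> ('p \<Rightarrow> 'b \<Rightarrow> real) \<Rightarrow> (nat \<Rightarrow> 'p) \<Rightarrow> (nat \<Rightarrow> nat \<Rightarrow> 'a \<Rightarrow> 'b) \<Rightarrow> nat \<Rightarrow> nat \<Rightarrow> real \<Rightarrow> real" where
  "mse M P rw x Y n m lam =
     (\<Sum>i<n. \<Sum>j<m. \<integral>\<omega>. (baseline rw x Y n m lam i j \<omega> - mu P rw x i)\<^sup>2 \<partial>M) / (real m * real n)"

end

theory Submission
  imports Defs
begin

(* Writing Z_k^l = r_k^l - mu_k for the centred rewards, the error b_i^j(lambda) - mu_i is a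
  deterministic linear combination of the Z_k^l plus the constant lambda (mubar - mu_i).  The Z_k^l
  are independent with mean 0 and variance sigma_k^2, hence orthogonal, so the expected square is a
  weighted sum of the sigma_k^2 plus the square of the constant.  Averaging over i and j yields
  v + (n - 1) / n ((s + v) lambda^2 - 2 v lambda), a convex quadratic with vertex v / (s + v),
  which lies in [0, 1] because s and v are nonnegative. *)

lemma square_sum_eq_double_sum:
  fixes f :: "'i \<Rightarrow> 'b::comm_semiring_1"
  shows "(\<Sum>a\<in>I. c a * f a)\<^sup>2 = (\<Sum>a\<in>I. \<Sum>b\<in>I. c a * c b * (f a * f b))"
  by (simp add: power2_eq_square sum_product mult_ac)

lemma integrable_square_sum:
  fixes Z :: "'i \<Rightarrow> 'a \<Rightarrow> real"
  assumes "\<And>a b. a \<in> I \<Longrightarrow> b \<in> I \<Longrightarrow> integrable M (\<lambda>\<omega>. Z a \<omega> * Z b \<omega>)"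
  shows "integrable M (\<lambda>\<omega>. (\<Sum>a\<in>I. c a * Z a \<omega>)\<^sup>2)"
  using assms by (simp add: square_sum_eq_double_sum)

lemma integral_square_sum_orthogonal:
  fixes Z :: "'i \<Rightarrow> 'a \<Rightarrow> real"
  assumes "finite I"
    and integrable: "\<And>a b. a \<in> I \<Longrightarrow> b \<in> I \<Longrightarrow> integrable M (\<lambda>\<omega>. Z a \<omega> * Z b \<omega>)"
    and orthogonal: "\<And>a b. a \<in> I \<Longrightarrow> b \<in> I \<Longrightarrow> a \<noteq> b \<Longrightarrow> (\<integral>\<omega>. Z a \<omega> * Z b \<omega> \<partial>M) = 0"
  shows "(\<integral>\<omega>. (\<Sum>a\<in>I. c a * Z a \<omega>)\<^sup>2 \<partial>M) = (\<Sum>a\<in>I. (c a)\<^sup>2 * (\<integral>\<omega>. (Z a \<omega>)\<^sup>2 \<partial>M))"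
proof -
  have "(\<integral>\<omega>. (\<Sum>a\<in>I. c a * Z a \<omega>)\<^sup>2 \<partial>M)
      = (\<Sum>a\<in>I. \<Sum>b\<in>I. c a * c b * (\<integral>\<omega>. Z a \<omega> * Z b \<omega> \<partial>M))"
    using integrable by (simp add: square_sum_eq_double_sum integrable_sum)
  also have "\<dots> = (\<Sum>a\<in>I. c a * c a * (\<integral>\<omega>. Z a \<omega> * Z a \<omega> \<partial>M))"
  proof (intro sum.cong refl)
    fix a assume "a \<in> I"
    have "(\<Sum>b\<in>I - {a}. c a * c b * (\<integral>\<omega>. Z a \<omega> * Z b \<omega> \<partial>M)) = 0"
      using orthogonal \<open>a \<in> I\<close> by (intro sum.neutral) auto
    then show "(\<Sum>b\<in>I. c a * c b * (\<integral>\<omega>. Z a \<omega> * Z b \<omega> \<partial>M)) = c a * c a * (\<integral>\<omega>. Z a \<omega> * Z a \<omega> \<partial>M)"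
      using \<open>finite I\<close> \<open>a \<in> I\<close> by (simp add: sum.remove)
  qed
  finally show ?thesis
    by (simp add: power2_eq_square)
qed

lemma (in prob_space) integral_square_add_const:
  fixes X :: "'a \<Rightarrow> real"
  assumes "integrable M X" "integrable M (\<lambda>\<omega>. (X \<omega>)\<^sup>2)" "expectation X = 0"
  shows "(\<integral>\<omega>. (X \<omega> + d)\<^sup>2 \<partial>M) = (\<integral>\<omega>. (X \<omega>)\<^sup>2 \<partial>M) + d\<^sup>2"
  using assms by (simp add: power2_sum prob_space)

lemma (in prob_space) indep_vars_integral_mult:
  fixes X :: "'i \<Rightarrow> 'a \<Rightarrow> real"
  assumes indep: "indep_vars (\<lambda>_. borel) X I" and "a \<in> I" "b \<in> I" "a \<noteq> b"
    and "integrable M (X a)" "integrable M (X b)"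
  shows "integrable M (\<lambda>\<omega>. X a \<omega> * X b \<omega>)"
    and "(\<integral>\<omega>. X a \<omega> * X b \<omega> \<partial>M) = expectation (X a) * expectation (X b)"
proof -
  have indep_ab: "indep_vars (\<lambda>_. borel) X {a, b}"
    using indep assms(2,3) by (auto intro: indep_vars_subset)
  have integrable_ab: "\<And>c. c \<in> {a, b} \<Longrightarrow> integrable M (X c)"
    using assms(5,6) by auto
  have prod_ab: "(\<Prod>c\<in>{a, b}. X c \<omega>) = X a \<omega> * X b \<omega>" for \<omega>
    using \<open>a \<noteq> b\<close> by simp
  show "integrable M (\<lambda>\<omega>. X a \<omega> * X b \<omega>)"
    using indep_vars_integrable[OF _ indep_ab integrable_ab] by (simp add: prod_ab)
  show "(\<integral>\<omega>. X a \<omega> * X b \<omega> \<partial>M) = expectation (X a) * expectation (X b)"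
    using indep_vars_lebesgue_integral[OF _ indep_ab integrable_ab] \<open>a \<noteq> b\<close> by (simp add: prod_ab)
qed

lemma quadratic_min_at_vertex:
  fixes a b t :: real
  assumes "a > 0"
  shows "a * (b / a)\<^sup>2 - 2 * b * (b / a) \<le> a * t\<^sup>2 - 2 * b * t"
proof -
  have "a * t\<^sup>2 - 2 * b * t - (a * (b / a)\<^sup>2 - 2 * b * (b / a)) = a * (t - b / a)\<^sup>2"
    using assms by (simp add: field_simps power2_eq_square)
  moreover have "a * (t - b / a)\<^sup>2 \<ge> 0"
    using assms by simp
  ultimately show ?thesis
    by linarith
qed

lemma sigma2_nonneg: "sigma2 P rw x i \<ge> 0"
  by (simp add: sigma2_def)

lemma vbar_nonneg: "vbar P rw x n m \<ge> 0"
  by (simp add: vbar_def sigma2_nonneg sum_nonneg)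

lemma sbar_nonneg: "sbar P rw x n \<ge> 0"
  by (cases "n = 0") (simp_all add: sbar_def sum_nonneg)

lemma sbar_mult: "(real n - 1) * sbar P rw x n = (\<Sum>i<n. (mu P rw x i - mubar P rw x n)\<^sup>2)"
proof (cases "n = 1")
  case True
  then show ?thesis by (simp add: sbar_def mubar_def)
next
  case False
  then show ?thesis by (simp add: sbar_def)
qed

(* That each P (x i) is a probability space need not be assumed: it is the law of Y i 0. *)
locale prompt_response_model = prob_space M
  for M :: "'a measure" +
  fixes N :: "'b measure" and P :: "'p \<Rightarrow> 'b measure" and rw :: "'p \<Rightarrow> 'b \<Rightarrow> real"
    and x :: "nat \<Rightarrow> 'p" and Y :: "nat \<Rightarrow> nat \<Rightarrow> 'a \<Rightarrow> 'b" and n m :: nat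
  assumes n_pos: "0 < n" and m_pos: "0 < m"
    and indep_responses: "indep_vars (\<lambda>_. N) (\<lambda>(i, j). Y i j) ({..<n} \<times> {..<m})"
    and distr_response: "\<And>i j. i < n \<Longrightarrow> j < m \<Longrightarrow> distr M N (Y i j) = P (x i)"
    and reward_measurable: "\<And>i. i < n \<Longrightarrow> rw (x i) \<in> borel_measurable N"
    and reward_square_integrable: "\<And>i. i < n \<Longrightarrow> integrable (P (x i)) (\<lambda>y. (rw (x i) y)\<^sup>2)"
begin

lemma response_measurable: "i < n \<Longrightarrow> j < m \<Longrightarrow> Y i j \<in> measurable M N"
  using indep_responses unfolding indep_vars_def by auto

lemma
  fixes g :: "'b \<Rightarrow> real"
  assumes "i < n" "j < m" "g \<in> borel_measurable N"
  shows integrable_response_comp_iff: "integrable M (\<lambda>\<omega>. g (Y i j \<omega>)) \<longleftrightarrow> integrable (P (x i)) g"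
    and integral_response_comp: "(\<integral>\<omega>. g (Y i j \<omega>) \<partial>M) = (\<integral>y. g y \<partial>P (x i))"
  using integrable_distr_eq[OF response_measurable[OF assms(1,2)] assms(3)]
    integral_distr[OF response_measurable[OF assms(1,2)] assms(3)] distr_response[OF assms(1,2)]
  by simp_all

lemma prob_space_response: "i < n \<Longrightarrow> prob_space (P (x i))"
  using prob_space_distr[OF response_measurable[OF _ m_pos]] distr_response[OF _ m_pos] by simp

lemma reward_integrable: "i < n \<Longrightarrow> integrable (P (x i)) (rw (x i))"
proof -
  assume "i < n"
  then interpret response: prob_space "P (x i)" by (rule prob_space_response)
  have "sets (P (x i)) = sets N"
    unfolding distr_response[OF \<open>i < n\<close> m_pos, symmetric] by simp
  then have "rw (x i) \<in> borel_measurable (P (x i))"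
    using reward_measurable[OF \<open>i < n\<close>] measurable_cong_sets[OF _ refl] by blast
  then show ?thesis
    using reward_square_integrable[OF \<open>i < n\<close>] by (rule response.square_integrable_imp_integrable)
qed

definition centred_reward :: "nat \<times> nat \<Rightarrow> 'a \<Rightarrow> real" where
  "centred_reward = (\<lambda>(i, j) \<omega>. rwd rw x Y i j \<omega> - mu P rw x i)"

lemma centred_reward_moments:
  assumes "a \<in> {..<n} \<times> {..<m}"
  shows "integrable M (centred_reward a)"
    and "(\<integral>\<omega>. centred_reward a \<omega> \<partial>M) = 0"
    and "integrable M (\<lambda>\<omega>. (centred_reward a \<omega>)\<^sup>2)"
    and "(\<integral>\<omega>. (centred_reward a \<omega>)\<^sup>2 \<partial>M) = sigma2 P rw x (fst a)"
proof -
  obtain i j where a: "a = (i, j)" and "i < n" "j < m"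
    using assms by blast
  interpret response: prob_space "P (x i)"
    using \<open>i < n\<close> by (rule prob_space_response)
  define g where "g = (\<lambda>y. rw (x i) y - mu P rw x i)"
  have g_measurable: "g \<in> borel_measurable N" "(\<lambda>y. (g y)\<^sup>2) \<in> borel_measurable N"
    using reward_measurable[OF \<open>i < n\<close>] unfolding g_def by measurable
  have centred_reward_eq: "centred_reward a = (\<lambda>\<omega>. g (Y i j \<omega>))" "fst a = i"
    by (simp_all add: centred_reward_def rwd_def g_def a)
  have "integrable (P (x i)) g" "integrable (P (x i)) (\<lambda>y. (g y)\<^sup>2)"
    using reward_integrable[OF \<open>i < n\<close>] reward_square_integrable[OF \<open>i < n\<close>]
    by (simp_all add: g_def power2_diff)
  moreover have "(\<integral>y. g y \<partial>P (x i)) = 0"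
    using reward_integrable[OF \<open>i < n\<close>] by (simp add: g_def mu_def response.prob_space)
  moreover have "(\<integral>y. (g y)\<^sup>2 \<partial>P (x i)) = sigma2 P rw x i"
    by (simp add: g_def sigma2_def)
  ultimately show "integrable M (centred_reward a)"
    and "(\<integral>\<omega>. centred_reward a \<omega> \<partial>M) = 0"
    and "integrable M (\<lambda>\<omega>. (centred_reward a \<omega>)\<^sup>2)"
    and "(\<integral>\<omega>. (centred_reward a \<omega>)\<^sup>2 \<partial>M) = sigma2 P rw x (fst a)"
    unfolding centred_reward_eq
    using integrable_response_comp_iff[OF \<open>i < n\<close> \<open>j < m\<close> g_measurable(1)]
      integrable_response_comp_iff[OF \<open>i < n\<close> \<open>j < m\<close> g_measurable(2)]
      integral_response_comp[OF \<open>i < n\<close> \<open>j < m\<close> g_measurable(1)]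
      integral_response_comp[OF \<open>i < n\<close> \<open>j < m\<close> g_measurable(2)]
    by simp_all
qed

lemma indep_centred_rewards: "indep_vars (\<lambda>_. borel) centred_reward ({..<n} \<times> {..<m})"
proof -
  have "indep_vars (\<lambda>_. borel) (\<lambda>a \<omega>. (\<lambda>(i, j) y. rw (x i) y - mu P rw x i) a ((\<lambda>(i, j). Y i j) a \<omega>))
      ({..<n} \<times> {..<m})"
  proof (rule indep_vars_compose2[OF indep_responses])
    fix a assume "a \<in> {..<n} \<times> {..<m}"
    then obtain i j where "a = (i, j)" "i < n"
      by blast
    then show "(\<lambda>(i, j) y. rw (x i) y - mu P rw x i) a \<in> borel_measurable N"
      using reward_measurable[OF \<open>i < n\<close>] by simp
  qed
  also have "(\<lambda>a \<omega>. (\<lambda>(i, j) y. rw (x i) y - mu P rw x i) a ((\<lambda>(i, j). Y i j) a \<omega>)) = centred_reward"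
    by (auto simp: fun_eq_iff centred_reward_def rwd_def)
  finally show ?thesis .
qed

lemma centred_rewards_orthogonal:
  assumes "a \<in> {..<n} \<times> {..<m}" "b \<in> {..<n} \<times> {..<m}" "a \<noteq> b"
  shows "integrable M (\<lambda>\<omega>. centred_reward a \<omega> * centred_reward b \<omega>)"
    and "(\<integral>\<omega>. centred_reward a \<omega> * centred_reward b \<omega> \<partial>M) = 0"
proof -
  have "integrable M (centred_reward a)" "integrable M (centred_reward b)"
    using centred_reward_moments(1) assms(1,2) by blast+
  from indep_vars_integral_mult[OF indep_centred_rewards assms this]
  show "integrable M (\<lambda>\<omega>. centred_reward a \<omega> * centred_reward b \<omega>)"
    and "(\<integral>\<omega>. centred_reward a \<omega> * centred_reward b \<omega> \<partial>M) = 0"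
    by (simp_all add: centred_reward_moments(2)[OF assms(1)])
qed

definition baseline_weight :: "real \<Rightarrow> nat \<Rightarrow> nat \<times> nat \<Rightarrow> real" where
  "baseline_weight lam i = (\<lambda>(k, l). (if k = i then (1 - lam) / real m else 0) + lam / (real n * real m))"

lemma muhat_eq: "muhat rw x Y m i \<omega> = mu P rw x i + (\<Sum>l<m. centred_reward (i, l) \<omega>) / real m"
  using m_pos by (simp add: muhat_def centred_reward_def sum_subtractf field_simps)

lemma mubarhat_eq:
  "mubarhat rw x Y n m \<omega> = mubar P rw x n + (\<Sum>a\<in>{..<n} \<times> {..<m}. centred_reward a \<omega>) / (real n * real m)"
proof -
  have "(\<Sum>a\<in>{..<n} \<times> {..<m}. centred_reward a \<omega>)
      = (\<Sum>k<n. \<Sum>l<m. rwd rw x Y k l \<omega>) - real m * (\<Sum>k<n. mu P rw x k)"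
    by (simp add: sum.cartesian_product' centred_reward_def sum_subtractf sum_distrib_left)
  then show ?thesis
    using n_pos m_pos by (simp add: mubarhat_def mubar_def field_simps)
qed

lemma baseline_error_eq:
  assumes "i < n"
  shows "baseline rw x Y n m lam i j \<omega> - mu P rw x i
    = (\<Sum>a\<in>{..<n} \<times> {..<m}. baseline_weight lam i a * centred_reward a \<omega>)
      + lam * (mubar P rw x n - mu P rw x i)"
proof -
  have own_prompt: "(\<Sum>a\<in>{..<n} \<times> {..<m}. (if fst a = i then c * centred_reward a \<omega> else 0))
      = c * (\<Sum>l<m. centred_reward (i, l) \<omega>)" for c
    using assms by (simp add: sum.cartesian_product' sum_distrib_left if_distrib sum.If_cases)
  have "(\<Sum>a\<in>{..<n} \<times> {..<m}. baseline_weight lam i a * centred_reward a \<omega>)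
      = (1 - lam) / real m * (\<Sum>l<m. centred_reward (i, l) \<omega>)
        + lam / (real n * real m) * (\<Sum>a\<in>{..<n} \<times> {..<m}. centred_reward a \<omega>)"
  proof -
    have "baseline_weight lam i a * centred_reward a \<omega>
        = (if fst a = i then (1 - lam) / real m * centred_reward a \<omega> else 0)
          + lam / (real n * real m) * centred_reward a \<omega>" for a
      by (simp add: baseline_weight_def split_beta distrib_right)
    then show ?thesis
      by (simp add: sum.distrib sum_distrib_left own_prompt)
  qed
  then show ?thesis
    by (simp add: baseline_def muhat_eq mubarhat_eq algebra_simps)
qed

lemma expected_baseline_error:
  assumes "i < n"
  shows "(\<integral>\<omega>. (baseline rw x Y n m lam i j \<omega> - mu P rw x i)\<^sup>2 \<partial>M)
    = (\<Sum>a\<in>{..<n} \<times> {..<m}. (baseline_weight lam i a)\<^sup>2 * sigma2 P rw x (fst a))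
      + (lam * (mubar P rw x n - mu P rw x i))\<^sup>2"
proof -
  let ?I = "{..<n} \<times> {..<m}"
  let ?S = "\<lambda>\<omega>. \<Sum>a\<in>?I. baseline_weight lam i a * centred_reward a \<omega>"
  have products_integrable: "integrable M (\<lambda>\<omega>. centred_reward a \<omega> * centred_reward b \<omega>)"
    if "a \<in> ?I" "b \<in> ?I" for a b
    using centred_rewards_orthogonal(1)[OF that] centred_reward_moments(3)[OF that(1)]
    by (cases "a = b") (simp_all add: power2_eq_square)
  have "(\<integral>\<omega>. (baseline rw x Y n m lam i j \<omega> - mu P rw x i)\<^sup>2 \<partial>M)
      = (\<integral>\<omega>. (?S \<omega>)\<^sup>2 \<partial>M) + (lam * (mubar P rw x n - mu P rw x i))\<^sup>2"
    unfolding baseline_error_eq[OF assms]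
    by (rule integral_square_add_const)
      (auto intro!: integrable_square_sum products_integrable simp: centred_reward_moments)
  also have "(\<integral>\<omega>. (?S \<omega>)\<^sup>2 \<partial>M)
      = (\<Sum>a\<in>?I. (baseline_weight lam i a)\<^sup>2 * (\<integral>\<omega>. (centred_reward a \<omega>)\<^sup>2 \<partial>M))"
    by (rule integral_square_sum_orthogonal[OF _ products_integrable centred_rewards_orthogonal(2)]) auto
  also have "\<dots> = (\<Sum>a\<in>?I. (baseline_weight lam i a)\<^sup>2 * sigma2 P rw x (fst a))"
    by (simp add: centred_reward_moments(4))
  finally show ?thesis .
qed

lemma sum_baseline_weight_sq:
  assumes "i < n"
  shows "(\<Sum>a\<in>{..<n} \<times> {..<m}. (baseline_weight lam i a)\<^sup>2 * sigma2 P rw x (fst a))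
    = ((1 - lam)\<^sup>2 / real m + 2 * (1 - lam) * lam / (real n * real m)) * sigma2 P rw x i
      + lam\<^sup>2 * vbar P rw x n m / real n"
proof -
  define A where "A = (1 - lam)\<^sup>2 / (real m)\<^sup>2 + 2 * (1 - lam) * lam / (real n * (real m)\<^sup>2)"
  define B where "B = lam\<^sup>2 / (real n * real m)\<^sup>2"
  have weight_sq: "(baseline_weight lam i (k, l))\<^sup>2 * sigma2 P rw x k
      = (if k = i then A * sigma2 P rw x k else 0) + B * sigma2 P rw x k" for k l
    using n_pos m_pos by (simp add: baseline_weight_def A_def B_def power2_eq_square field_simps)
  have "(\<Sum>a\<in>{..<n} \<times> {..<m}. (baseline_weight lam i a)\<^sup>2 * sigma2 P rw x (fst a))
      = real m * (\<Sum>k<n. (if k = i then A * sigma2 P rw x k else 0) + B * sigma2 P rw x k)"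
    by (simp add: sum.cartesian_product' weight_sq sum_distrib_left)
  also have "\<dots> = real m * (A * sigma2 P rw x i + B * (\<Sum>k<n. sigma2 P rw x k))"
    using assms by (simp add: sum.distrib sum_distrib_left)
  also have "\<dots> = ((1 - lam)\<^sup>2 / real m + 2 * (1 - lam) * lam / (real n * real m)) * sigma2 P rw x i
      + lam\<^sup>2 * vbar P rw x n m / real n"
    using n_pos m_pos by (simp add: A_def B_def vbar_def power2_eq_square field_simps)
  finally show ?thesis .
qed

lemma mse_closed_form:
  "mse M P rw x Y n m lam
    = vbar P rw x n m + (real n - 1) / real n
        * ((sbar P rw x n + vbar P rw x n m) * lam\<^sup>2 - 2 * vbar P rw x n m * lam)"
proof -
  let ?v = "vbar P rw x n m" and ?s = "sbar P rw x n" and ?mu = "mu P rw x" and ?mubar = "mubar P rw x n"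
  define err where "err i = ((1 - lam)\<^sup>2 / real m + 2 * (1 - lam) * lam / (real n * real m)) * sigma2 P rw x i
      + lam\<^sup>2 * ?v / real n + lam\<^sup>2 * (?mubar - ?mu i)\<^sup>2" for i
  have "(\<integral>\<omega>. (baseline rw x Y n m lam i j \<omega> - ?mu i)\<^sup>2 \<partial>M) = err i" if "i < n" for i j
    using that by (simp add: expected_baseline_error sum_baseline_weight_sq err_def power_mult_distrib)
  then have "mse M P rw x Y n m lam = (\<Sum>i<n. real m * err i) / (real m * real n)"
    by (simp add: mse_def)
  also have "\<dots> = (\<Sum>i<n. err i) / real n"
    using m_pos by (simp add: sum_distrib_left[symmetric])
  also have "(\<Sum>i<n. err i)
      = ((1 - lam)\<^sup>2 / real m + 2 * (1 - lam) * lam / (real n * real m)) * (\<Sum>i<n. sigma2 P rw x i)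
        + lam\<^sup>2 * ?v + lam\<^sup>2 * ((real n - 1) * ?s)"
    using n_pos by (simp add: err_def sum.distrib sum_distrib_left sbar_mult power2_commute)
  also have "(\<Sum>i<n. sigma2 P rw x i) = real n * real m * ?v"
    using n_pos m_pos by (simp add: vbar_def)
  also have "(((1 - lam)\<^sup>2 / real m + 2 * (1 - lam) * lam / (real n * real m)) * (real n * real m * ?v)
        + lam\<^sup>2 * ?v + lam\<^sup>2 * ((real n - 1) * ?s)) / real n
      = ?v + (real n - 1) / real n * ((?s + ?v) * lam\<^sup>2 - 2 * ?v * lam)"
    using n_pos m_pos by (simp add: field_simps power2_eq_square)
  finally show ?thesis .
qed

end

theorem proposition2:
  fixes M :: "'a measure" and N :: "'b measure" and P :: "'p \<Rightarrow> 'b measure"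
    and rw :: "'p \<Rightarrow> 'b \<Rightarrow> real" and x :: "nat \<Rightarrow> 'p"
    and Y :: "nat \<Rightarrow> nat \<Rightarrow> 'a \<Rightarrow> 'b" and n m :: nat
  assumes "prob_space M"
    and "n \<ge> 2" and "m \<ge> 1"
    and "\<And>i. i < n \<Longrightarrow> prob_space (P (x i))"
    and "prob_space.indep_vars M (\<lambda>_. N) (\<lambda>(i, j). Y i j) ({..<n} \<times> {..<m})"
    and "\<And>i j. i < n \<Longrightarrow> j < m \<Longrightarrow> distr M N (Y i j) = P (x i)"
    and "\<And>i. i < n \<Longrightarrow> rw (x i) \<in> borel_measurable N"
    and "\<And>i. i < n \<Longrightarrow> integrable (P (x i)) (\<lambda>y. (rw (x i) y)\<^sup>2)"
    and "sbar P rw x n + vbar P rw x n m > 0"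
  shows "vbar P rw x n m / (sbar P rw x n + vbar P rw x n m) \<in> {0..1}
    \<and> (\<forall>lam\<in>{0..1}.
         mse M P rw x Y n m (vbar P rw x n m / (sbar P rw x n + vbar P rw x n m))
           \<le> mse M P rw x Y n m lam)"
proof -
  interpret prompt_response_model M N P rw x Y n m
  proof (intro prompt_response_model.intro prompt_response_model_axioms.intro)
    show "0 < n" "0 < m"
      using assms(2,3) by simp_all
  qed (fact assms)+
  define v where "v = vbar P rw x n m"
  define s where "s = sbar P rw x n"
  have "s + v > 0"
    using assms(9) by (simp add: s_def v_def)
  moreover have "v \<ge> 0" "s \<ge> 0"
    by (simp_all add: v_def s_def vbar_nonneg sbar_nonneg)
  ultimately have vertex_in_unit_interval: "v / (s + v) \<in> {0..1}"
    by auto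
  have "mse M P rw x Y n m (v / (s + v)) \<le> mse M P rw x Y n m lam" for lam
  proof -
    have "(s + v) * (v / (s + v))\<^sup>2 - 2 * v * (v / (s + v)) \<le> (s + v) * lam\<^sup>2 - 2 * v * lam"
      using \<open>s + v > 0\<close> by (rule quadratic_min_at_vertex)
    moreover have "(real n - 1) / real n \<ge> 0"
      using assms(2) by simp
    ultimately show ?thesis
      unfolding mse_closed_form s_def[symmetric] v_def[symmetric] by (intro add_left_mono mult_left_mono)
  qed
  with vertex_in_unit_interval show ?thesis
    unfolding s_def v_def by blast
qed

end
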